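(* Let $n\ge 2$, let $M$ be an $(n-1)\times(n-1)$ circulant matrix over $R$, and let $\alpha,\beta,\gamma\in R$ with $\gamma=\beta$ or $\gamma=-\beta$. Let $B$ be the $n\times n$ bordered circulant matrix whose first row is $(\alpha,\beta,\dots,\beta)$, whose first column is $(\alpha,\gamma,\dots,\gamma)^T$, and whose lower-right $(n-1)\times(n-1)$ block is $M$. Then the linear code over $R$ generated by the rows of $[I_n\mid B]$ is a Euclidean isodual code of length $2n$ over $R$.
   Context: $R=\mathbb{Z}_4[v]/(v^2-v)$. Linear codes over $R$ are $R$-submodules of $R^N$; the Euclidean dual of $\mathcal{C}$ is $\mathcal{C}^\perp=\{\mathbf{x}:\sum_ix_ic_i=0\ \forall\mathbf{c}\in\mathcal{C}\}$. Two codes of length $N$ over $R$ are equivalent if one is obtained from the other by a permutation of coordinates followed by multiplication of some coordinates by units of $R$. A code is Euclidean isodual if it is equivalent to its Euclidean dual. A circulant matrix is one in which each row is the cyclic shift by one position to the right of the previous row. *)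

theory Defs
  imports Main "HOL-Library.Numeral_Type" "HOL-Combinatorics.Permutations"
begin

text \<open>An element Rp a b represents a + b v with a, b in Z4 (the type 4).
  Since v^2 = v: (a + b v)(c + d v) = ac + (ad + bc + bd) v.\<close>

datatype R = Rp "4" "4"

fun Rfst :: "R \<Rightarrow> 4" where "Rfst (Rp a b) = a"
fun Rsnd :: "R \<Rightarrow> 4" where "Rsnd (Rp a b) = b"

lemma R_eq_iff: "x = y \<longleftrightarrow> Rfst x = Rfst y \<and> Rsnd x = Rsnd y"
  by (cases x; cases y) auto

instantiation R :: comm_ring_1
begin
definition "0 = Rp 0 0"
definition "1 = Rp 1 0"
definition "x + y = Rp (Rfst x + Rfst y) (Rsnd x + Rsnd y)"
definition "x - y = Rp (Rfst x - Rfst y) (Rsnd x - Rsnd y)"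
definition "- x = Rp (- Rfst x) (- Rsnd x)"
definition "x * y = Rp (Rfst x * Rfst y)
     (Rfst x * Rsnd y + Rsnd x * Rfst y + Rsnd x * Rsnd y)"
instance
  by standard (auto simp: R_eq_iff zero_R_def one_R_def plus_R_def minus_R_def
      uminus_R_def times_R_def algebra_simps)
end

definition words :: "nat \<Rightarrow> (nat \<Rightarrow> R) set" where
  "words N = {x. \<forall>i\<ge>N. x i = 0}"

definition linear_code :: "nat \<Rightarrow> (nat \<Rightarrow> R) set \<Rightarrow> bool" where
  "linear_code N C \<longleftrightarrow> C \<subseteq> words N \<and> (\<lambda>_. 0) \<in> C \<and>
     (\<forall>x\<in>C. \<forall>y\<in>C. (\<lambda>i. x i + y i) \<in> C) \<and>
     (\<forall>r. \<forall>x\<in>C. (\<lambda>i. r * x i) \<in> C)"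

definition row_code :: "nat \<Rightarrow> nat \<Rightarrow> (nat \<Rightarrow> nat \<Rightarrow> R) \<Rightarrow> (nat \<Rightarrow> R) set" where
  "row_code k N G = {x. \<exists>c. x = (\<lambda>j. if j < N then (\<Sum>i<k. c i * G i j) else 0)}"

definition euclid_dual :: "nat \<Rightarrow> (nat \<Rightarrow> R) set \<Rightarrow> (nat \<Rightarrow> R) set" where
  "euclid_dual N C = {x \<in> words N. \<forall>c\<in>C. (\<Sum>i<N. x i * c i) = 0}"

definition code_equiv :: "nat \<Rightarrow> (nat \<Rightarrow> R) set \<Rightarrow> (nat \<Rightarrow> R) set \<Rightarrow> bool" where
  "code_equiv N C D \<longleftrightarrow> (\<exists>\<sigma> u. \<sigma> permutes {..<N} \<and> (\<forall>i<N. u i dvd (1::R)) \<and>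
     D = (\<lambda>c. (\<lambda>i. if i < N then u i * c (\<sigma> i) else 0)) ` C)"

definition euclid_isodual :: "nat \<Rightarrow> (nat \<Rightarrow> R) set \<Rightarrow> bool" where
  "euclid_isodual N C \<longleftrightarrow> linear_code N C \<and> code_equiv N C (euclid_dual N C)"

definition circulant :: "nat \<Rightarrow> (nat \<Rightarrow> nat \<Rightarrow> R) \<Rightarrow> bool" where
  "circulant m M \<longleftrightarrow> (\<forall>i j. Suc i < m \<and> j < m \<longrightarrow> M (Suc i) ((Suc j) mod m) = M i j)"

definition bordered :: "R \<Rightarrow> R \<Rightarrow> R \<Rightarrow> (nat \<Rightarrow> nat \<Rightarrow> R) \<Rightarrow> nat \<Rightarrow> nat \<Rightarrow> R" where
  "bordered \<alpha> \<beta> \<gamma> M i j =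
     (if i = 0 \<and> j = 0 then \<alpha> else if i = 0 then \<beta> else if j = 0 then \<gamma>
      else M (i - 1) (j - 1))"

definition ident_concat :: "nat \<Rightarrow> (nat \<Rightarrow> nat \<Rightarrow> R) \<Rightarrow> nat \<Rightarrow> nat \<Rightarrow> R" where
  "ident_concat n B i j = (if j < n then (if i = j then 1 else 0) else B i (j - n))"

end

theory Submission
  imports Defs
begin

text \<open>The code generated by \<open>[I | B]\<close> consists of the words \<open>(c, cB)\<close>, and its Euclidean dual
  consists of the words \<open>(-Bz, z)\<close>, i.e. it is generated by \<open>[-B\<^sup>T | I]\<close>. Let \<open>Q\<close> fix the border
  index 0 and act on the block indices by \<open>i \<mapsto> -i\<close> modulo \<open>n - 1\<close>. Since a circulant matrix
  depends only on \<open>j - i\<close>, reversing both indices transposes it, and with \<open>D = diag(s, 1, \<dots>, 1)\<close>,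
  \<open>\<gamma> = s\<beta>\<close>, this gives \<open>B\<^sup>T = DQBQD\<close>. Hence swapping the two halves of the coordinates, reflecting
  each by \<open>Q\<close> and scaling by the units \<open>\<plusminus>D\<close> maps the codeword of \<open>c\<close> to the dual codeword of \<open>DQc\<close>,
  so it carries the code onto its dual.\<close>

lemma circulant_entry:
  assumes "circulant m M" "i < m" "j < m"
  shows "M i j = M 0 (nat ((int j - int i) mod int m))"
  using assms(2,3)
proof (induction i arbitrary: j)
  case 0
  then show ?case by simp
next
  case (Suc i)
  define j' where "j' = (j + m - 1) mod m"
  have "j' < m" using Suc.prems by (simp add: j'_def)
  have "Suc j' mod m = j"
    using Suc.prems by (simp add: j'_def mod_Suc_eq)
  have "int j' mod int m = (int j - 1) mod int m"
  proof -
    have "int j' = (int j - 1 + int m) mod int m"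
      using Suc.prems by (simp add: j'_def of_nat_mod of_nat_diff algebra_simps)
    then show ?thesis by simp
  qed
  have "M (Suc i) j = M (Suc i) (Suc j' mod m)"
    using \<open>Suc j' mod m = j\<close> by simp
  also have "\<dots> = M i j'"
    using assms(1) Suc.prems \<open>j' < m\<close> unfolding circulant_def by blast
  also have "\<dots> = M 0 (nat ((int j' - int i) mod int m))"
    using Suc \<open>j' < m\<close> by simp
  also have "(int j' - int i) mod int m = (int j - 1 - int i) mod int m"
    using \<open>int j' mod int m = (int j - 1) mod int m\<close> by (metis mod_diff_left_eq)
  also have "int j - 1 - int i = int j - int (Suc i)"
    by simp
  finally show ?case .
qed

lemma circulant_reverse:
  assumes "circulant m M" "a < m" "b < m"
  shows "M ((m - a) mod m) ((m - b) mod m) = M b a"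
proof -
  have "(int ((m - b) mod m) - int ((m - a) mod m)) mod int m = (int a - int b) mod int m"
  proof -
    have "int ((m - x) mod m) = (int m - int x) mod int m" if "x < m" for x
      using that by (simp add: of_nat_mod of_nat_diff)
    then show ?thesis
      using assms by (simp add: mod_diff_eq)
  qed
  then show ?thesis
    using assms circulant_entry[OF assms(1)] by simp
qed

text \<open>On the block indices \<open>1, \<dots>, n - 1\<close> this is \<open>i - 1 \<mapsto> -(i - 1) mod (n - 1)\<close>.\<close>

definition bordered_reflection :: "nat \<Rightarrow> nat \<Rightarrow> nat" where
  "bordered_reflection n i = (if i \<le> 1 \<or> n \<le> i then i else n + 1 - i)"

lemma bordered_reflection_involution [simp]:
  "bordered_reflection n (bordered_reflection n i) = i"
  by (auto simp: bordered_reflection_def)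

lemma bordered_reflection_less: "i < n \<Longrightarrow> bordered_reflection n i < n"
  by (auto simp: bordered_reflection_def)

lemma bordered_reflection_block:
  "1 \<le> i \<Longrightarrow> i < n \<Longrightarrow>
    bordered_reflection n i - 1 = (n - 1 - (i - 1)) mod (n - 1) \<and> 1 \<le> bordered_reflection n i"
  by (cases "i = 1") (auto simp: bordered_reflection_def)

lemma bordered_transpose:
  assumes "circulant (n - 1) M" "\<gamma> = s * \<beta>" "s * s = 1" "a < n" "b < n"
  defines "d \<equiv> \<lambda>i. if i = 0 then s else 1"
  shows "bordered \<alpha> \<beta> \<gamma> M b a =
    d a * d b * bordered \<alpha> \<beta> \<gamma> M (bordered_reflection n a) (bordered_reflection n b)"
proof (cases "a = 0 \<or> b = 0")
  case True
  then show ?thesis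
    using assms by (auto simp: bordered_def bordered_reflection_def mult.assoc[symmetric])
next
  case False
  then have "a - 1 < n - 1" "b - 1 < n - 1"
    using assms by auto
  with False have "M (bordered_reflection n a - 1) (bordered_reflection n b - 1) = M (b - 1) (a - 1)"
    using assms bordered_reflection_block[of a n] bordered_reflection_block[of b n]
      circulant_reverse[OF assms(1), of "a - 1" "b - 1"] by simp
  then show ?thesis
    using False assms bordered_reflection_block[of a n] bordered_reflection_block[of b n]
    by (simp add: bordered_def d_def)
qed

lemma linear_code_row_code: "linear_code N (row_code k N G)"
proof -
  define word where "word c = (\<lambda>j. if j < N then \<Sum>i<k. c i * G i j else 0)" for c
  have code: "row_code k N G = range word"
    by (auto simp: row_code_def word_def)
  have "(\<lambda>j. word c j + word c' j) = word (\<lambda>i. c i + c' i)" for c c'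
    by (auto simp: word_def distrib_right sum.distrib)
  moreover have "(\<lambda>j. r * word c j) = word (\<lambda>i. r * c i)" for r c
    by (auto simp: word_def sum_distrib_left mult.assoc)
  moreover have "(\<lambda>_. 0) = word (\<lambda>_. 0)"
    by (rule ext) (simp add: word_def)
  ultimately show ?thesis
    unfolding linear_code_def code by (auto simp: words_def word_def)
qed

definition systematic_word :: "nat \<Rightarrow> (nat \<Rightarrow> nat \<Rightarrow> R) \<Rightarrow> (nat \<Rightarrow> R) \<Rightarrow> nat \<Rightarrow> R" where
  "systematic_word n B c j =
     (if j < n then c j else if j < 2 * n then (\<Sum>i<n. c i * B i (j - n)) else 0)"

text \<open>\<open>check_word n B z\<close> is the word \<open>z\<^sup>T [-B\<^sup>T | I]\<close>.\<close>

definition check_word :: "nat \<Rightarrow> (nat \<Rightarrow> nat \<Rightarrow> R) \<Rightarrow> (nat \<Rightarrow> R) \<Rightarrow> nat \<Rightarrow> R" where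
  "check_word n B z j =
     (if j < n then - (\<Sum>k<n. B j k * z k) else if j < 2 * n then z (j - n) else 0)"

lemma row_code_ident_concat: "row_code n (2 * n) (ident_concat n B) = range (systematic_word n B)"
proof -
  have "(\<lambda>j. if j < 2 * n then \<Sum>i<n. c i * ident_concat n B i j else 0) = systematic_word n B c"
    for c
  proof
    fix j
    show "(if j < 2 * n then \<Sum>i<n. c i * ident_concat n B i j else 0) = systematic_word n B c j"
    proof (cases "j < n")
      case True
      then have "(\<Sum>i<n. c i * ident_concat n B i j) = (\<Sum>i<n. if i = j then c i else 0)"
        by (intro sum.cong) (auto simp: ident_concat_def)
      with True show ?thesis by (simp add: systematic_word_def)
    qed (simp add: systematic_word_def ident_concat_def)
  qed
  then show ?thesis
    unfolding row_code_def by auto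
qed

lemma sum_lessThan_add: "(\<Sum>i<m + (k::nat). f i) = (\<Sum>i<m. f i) + (\<Sum>i<k. f (m + i))"
  by (induction k) (auto simp: add.commute add.left_commute)

lemma inner_systematic_word:
  "(\<Sum>j<2 * n. y j * systematic_word n B c j) =
     (\<Sum>j<n. y j * c j) + (\<Sum>j<n. y (n + j) * (\<Sum>i<n. c i * B i j))"
  using sum_lessThan_add[of "\<lambda>j. y j * systematic_word n B c j" n n]
  by (simp add: mult_2 systematic_word_def)

lemma euclid_dual_systematic:
  "euclid_dual (2 * n) (range (systematic_word n B)) = range (check_word n B)"
proof (intro equalityI subsetI)
  fix y
  assume "y \<in> range (check_word n B)"
  then obtain z where y: "y = check_word n B z" by blast
  have "(\<Sum>j<2 * n. y j * systematic_word n B c j) = 0" for c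
  proof -
    have "(\<Sum>j<n. y j * c j) = - (\<Sum>i<n. c i * (\<Sum>j<n. B i j * z j))"
      by (simp add: y check_word_def sum_negf mult.commute)
    moreover have "(\<Sum>j<n. y (n + j) * (\<Sum>i<n. c i * B i j)) = (\<Sum>j<n. \<Sum>i<n. c i * B i j * z j)"
      by (simp add: y check_word_def sum_distrib_left mult_ac)
    moreover have "\<dots> = (\<Sum>i<n. c i * (\<Sum>j<n. B i j * z j))"
      by (subst sum.swap) (simp add: sum_distrib_left mult_ac)
    ultimately show ?thesis
      by (simp add: inner_systematic_word)
  qed
  then show "y \<in> euclid_dual (2 * n) (range (systematic_word n B))"
    by (auto simp: euclid_dual_def words_def y check_word_def)
next
  fix y
  assume dual: "y \<in> euclid_dual (2 * n) (range (systematic_word n B))"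
  have "y j = - (\<Sum>k<n. B j k * y (n + k))" if "j < n" for j
  proof -
    define e :: "nat \<Rightarrow> R" where "e i = (if i = j then 1 else 0)" for i
    have "(\<Sum>l<2 * n. y l * systematic_word n B e l) = 0"
      using dual by (auto simp: euclid_dual_def)
    moreover have "(\<Sum>i<n. e i * B i k) = B j k" for k
    proof -
      have "(\<Sum>i<n. e i * B i k) = (\<Sum>i<n. if i = j then B i k else 0)"
        by (rule sum.cong) (simp_all add: e_def)
      with that show ?thesis by simp
    qed
    moreover have "(\<Sum>l<n. y l * e l) = y j"
    proof -
      have "(\<Sum>l<n. y l * e l) = (\<Sum>l<n. if l = j then y l else 0)"
        by (rule sum.cong) (simp_all add: e_def)
      with that show ?thesis by simp
    qed
    ultimately have "y j + (\<Sum>k<n. y (n + k) * B j k) = 0"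
      by (simp add: inner_systematic_word)
    then show ?thesis
      by (simp add: eq_neg_iff_add_eq_0 mult.commute)
  qed
  moreover have "y j = 0" if "2 * n \<le> j" for j
    using dual that by (simp add: euclid_dual_def words_def)
  ultimately have "y = check_word n B (\<lambda>k. y (n + k))"
    by (auto simp: check_word_def)
  then show "y \<in> range (check_word n B)" by blast
qed

lemma code_equiv_systematic_check:
  assumes Q_less: "\<And>i. i < n \<Longrightarrow> Q i < n"
    and Q_involution: "\<And>i. i < n \<Longrightarrow> Q (Q i) = i"
    and d_square: "\<And>i. i < n \<Longrightarrow> d i * d i = 1"
    and transpose: "\<And>a b. a < n \<Longrightarrow> b < n \<Longrightarrow> B b a = d a * d b * B (Q a) (Q b)"
  shows "code_equiv (2 * n) (range (systematic_word n B)) (range (check_word n B))"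
proof -
  define \<sigma> where "\<sigma> j = (if j < n then n + Q j else if j < 2 * n then Q (j - n) else j)" for j
  define u where "u j = (if j < n then - d j else d (j - n))" for j
  define \<Phi> where "\<Phi> x = (\<lambda>i. if i < 2 * n then u i * x (\<sigma> i) else 0)" for x :: "nat \<Rightarrow> R"
  define twist where "twist c k = d k * c (Q k)" for c :: "nat \<Rightarrow> R" and k
  have Q_upper: "Q (j - n) < 2 * n" if "\<not> j < n" "j < 2 * n" for j
    using that Q_less[of "j - n"] by linarith
  have \<sigma>_permutes: "\<sigma> permutes {..<2 * n}"
  proof (rule bij_imp_permutes)
    show "bij_betw \<sigma> {..<2 * n} {..<2 * n}"
      by (rule bij_betw_byWitness[where f'=\<sigma>]) (auto simp: \<sigma>_def Q_less Q_involution Q_upper)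
  qed (simp add: \<sigma>_def)
  have u_unit: "u i dvd 1" if "i < 2 * n" for i
  proof -
    have "u i * u i = 1"
      using that d_square[of i] d_square[of "i - n"] by (cases "i < n") (simp_all add: u_def)
    then show ?thesis by (metis dvdI)
  qed
  have reindex: "(\<Sum>k<n. f (Q k)) = (\<Sum>i<n. f i)" for f :: "nat \<Rightarrow> R"
    by (rule sum.reindex_bij_witness[where i=Q and j=Q]) (auto simp: Q_less Q_involution)
  have "\<Phi> (systematic_word n B c) = check_word n B (twist c)" for c
  proof
    fix j
    show "\<Phi> (systematic_word n B c) j = check_word n B (twist c) j"
    proof (cases "j < n")
      case True
      have "(\<Sum>k<n. B j k * twist c k) = (\<Sum>k<n. d j * (c (Q k) * B (Q k) (Q j)))"
      proof (rule sum.cong)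
        fix k assume "k \<in> {..<n}"
        then have "B j k * d k = (d k * d k) * (d j * B (Q k) (Q j))"
          using transpose[of k j] True by (simp add: mult_ac)
        also have "\<dots> = d j * B (Q k) (Q j)"
          using \<open>k \<in> {..<n}\<close> d_square by simp
        finally have "B j k * d k = d j * B (Q k) (Q j)" .
        then have "(B j k * d k) * c (Q k) = d j * (c (Q k) * B (Q k) (Q j))"
          by (simp add: mult_ac)
        then show "B j k * twist c k = d j * (c (Q k) * B (Q k) (Q j))"
          by (simp add: twist_def mult.assoc)
      qed simp
      also have "\<dots> = d j * (\<Sum>i<n. c i * B i (Q j))"
        by (simp add: sum_distrib_left[symmetric] reindex[of "\<lambda>i. c i * B i (Q j)"])
      finally show ?thesis
        using True Q_less[OF True] by (simp add: \<Phi>_def \<sigma>_def u_def systematic_word_def check_word_def)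
    next
      case False
      then show ?thesis
        using Q_less[of "j - n"]
        by (simp add: \<Phi>_def \<sigma>_def u_def systematic_word_def check_word_def twist_def)
    qed
  qed
  then have "\<Phi> ` range (systematic_word n B) = range (check_word n B \<circ> twist)"
    by (auto simp: image_image)
  also have "\<dots> = range (check_word n B)"
  proof -
    have "check_word n B z = check_word n B (twist (\<lambda>i. d (Q i) * z (Q i)))" for z
    proof -
      have "\<forall>k<n. twist (\<lambda>i. d (Q i) * z (Q i)) k = z k"
        using d_square by (simp add: twist_def Q_involution mult.assoc[symmetric])
      then show ?thesis
        by (auto simp: check_word_def intro!: sum.cong)
    qed
    then show ?thesis
      by (auto simp: image_iff)
  qed
  finally show ?thesis
    unfolding code_equiv_def \<Phi>_def using \<sigma>_permutes u_unit by blast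
qed

lemma euclid_isodual_ident_concat:
  assumes "\<And>i. i < n \<Longrightarrow> Q i < n"
    and "\<And>i. i < n \<Longrightarrow> Q (Q i) = i"
    and "\<And>i. i < n \<Longrightarrow> d i * d i = 1"
    and "\<And>a b. a < n \<Longrightarrow> b < n \<Longrightarrow> B b a = d a * d b * B (Q a) (Q b)"
  shows "euclid_isodual (2 * n) (row_code n (2 * n) (ident_concat n B))"
  using linear_code_row_code[of "2 * n" n "ident_concat n B"]
    code_equiv_systematic_check[of n Q d B, OF assms]
  unfolding euclid_isodual_def row_code_ident_concat euclid_dual_systematic by simp

theorem mainTheorem9:
  fixes n :: nat and M :: "nat \<Rightarrow> nat \<Rightarrow> R" and \<alpha> \<beta> \<gamma> :: R
  assumes "n \<ge> 2"
    and "circulant (n - 1) M"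
    and "\<gamma> = \<beta> \<or> \<gamma> = - \<beta>"
  shows "euclid_isodual (2 * n) (row_code n (2 * n) (ident_concat n (bordered \<alpha> \<beta> \<gamma> M)))"
proof -
  define s :: R where "s = (if \<gamma> = \<beta> then 1 else - 1)"
  have sign: "\<gamma> = s * \<beta>" "s * s = 1"
    using assms(3) by (auto simp: s_def)
  show ?thesis
  proof (rule euclid_isodual_ident_concat[where Q = "bordered_reflection n"
        and d = "\<lambda>i. if i = 0 then s else 1"])
    show "bordered \<alpha> \<beta> \<gamma> M b a = (if a = 0 then s else 1) * (if b = 0 then s else 1) *
        bordered \<alpha> \<beta> \<gamma> M (bordered_reflection n a) (bordered_reflection n b)"
      if "a < n" "b < n" for a b
      using bordered_transpose[OF assms(2) sign that] .
  qed (simp_all add: bordered_reflection_less sign)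
qed

end
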